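(* Let $A,B,C$ be distinct subsystems, $\rho_{ABC}$ a subnormalized state on $ABC$, $r\ge0$, $\eta\in(0,\operatorname{tr}\rho_{ABC}]$. Then $H^{r,\eta}_H(A|BC)_\rho\le H^{r,\eta}_H(A|B)_\rho$.
   Context: All logarithms are natural; subnormalized state = positive semidefinite, trace $\le1$; POVM effect = $0\le Q\le\mathbb 1$. Let $S_1\cdots S_N$ be a finite-dimensional composite system and $S_I$ the composite of the $S_i$, $i\in I$ ($A,B,C$ are of the form $S_I,S_J,S_K$ with pairwise disjoint index sets). A family of POVM-effect-complexity sets is a collection of sets $\mathcal M^r_{S_I}$ of POVM effects on $S_I$ with (i) $\mathbb 1_{S_I}\in\mathcal M^0_{S_I}$; (ii) $\mathcal M^r_{S_I}\subseteq\mathcal M^{r'}_{S_I}$ for $r\le r'$; (iii) $Q_1\otimes Q_2\in\mathcal M^{r+r'}_{S_IS_J}$ for disjoint $I,J$, $Q_1\in\mathcal M^r_{S_I}$, $Q_2\in\mathcal M^{r'}_{S_J}$. Fix such a family. Complexity relative entropy on subsystem $X$: $D^{r,\eta}_H(\rho\|\Gamma)=-\log\inf\{\operatorname{tr}(Q\Gamma)/\operatorname{tr}(Q\rho): Q\in\mathcal M^r_X,\operatorname{tr}(Q\rho)\ge\eta\}$. Complexity conditional entropy: $H^{r,\eta}_H(X|Y)_\rho=-D^{r,\eta}_H(\rho_{XY}\|\mathbb 1_X\otimes\rho_Y)$ with $\rho_{XY},\rho_Y$ the reduced states of $\rho$. *)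

theory Defs
  imports "HOL-Analysis.Analysis"
begin

text \<open>Finite-dimensional composite system S_1 ... S_N (indices 0..N-1), with local
dimensions d i.  The computational basis of the subsystem S_I is indexed by
configurations: functions x :: nat => nat with x i < d i for i in I and x i = 0
outside I.  An operator on S_I is a complex kernel on configurations that vanishes
outside cfg d I x cfg d I (i.e. a matrix w.r.t. the product basis).\<close>

type_synonym cfgs = "nat \<Rightarrow> nat"
type_synonym op = "cfgs \<Rightarrow> cfgs \<Rightarrow> complex"

definition cfg :: "(nat \<Rightarrow> nat) \<Rightarrow> nat set \<Rightarrow> cfgs set" where
  "cfg d I = {x. (\<forall>i\<in>I. x i < d i) \<and> (\<forall>i. i \<notin> I \<longrightarrow> x i = 0)}"

definition is_op :: "(nat \<Rightarrow> nat) \<Rightarrow> nat set \<Rightarrow> op \<Rightarrow> bool" where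
  "is_op d I X \<longleftrightarrow> (\<forall>x y. (x \<notin> cfg d I \<or> y \<notin> cfg d I) \<longrightarrow> X x y = 0)"

definition ident :: "(nat \<Rightarrow> nat) \<Rightarrow> nat set \<Rightarrow> op" where
  "ident d I = (\<lambda>x y. if x \<in> cfg d I \<and> x = y then 1 else 0)"

definition op_mult :: "(nat \<Rightarrow> nat) \<Rightarrow> nat set \<Rightarrow> op \<Rightarrow> op \<Rightarrow> op" where
  "op_mult d I X Y = (\<lambda>x y. \<Sum>z\<in>cfg d I. X x z * Y z y)"

definition op_trace :: "(nat \<Rightarrow> nat) \<Rightarrow> nat set \<Rightarrow> op \<Rightarrow> complex" where
  "op_trace d I X = (\<Sum>x\<in>cfg d I. X x x)"

definition psd :: "(nat \<Rightarrow> nat) \<Rightarrow> nat set \<Rightarrow> op \<Rightarrow> bool" where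
  "psd d I X \<longleftrightarrow> is_op d I X \<and>
     (\<forall>v :: cfgs \<Rightarrow> complex.
        Im (\<Sum>x\<in>cfg d I. \<Sum>y\<in>cfg d I. cnj (v x) * X x y * v y) = 0 \<and>
        Re (\<Sum>x\<in>cfg d I. \<Sum>y\<in>cfg d I. cnj (v x) * X x y * v y) \<ge> 0)"

definition subnormalized_state :: "(nat \<Rightarrow> nat) \<Rightarrow> nat set \<Rightarrow> op \<Rightarrow> bool" where
  "subnormalized_state d I \<rho> \<longleftrightarrow> psd d I \<rho> \<and> Re (op_trace d I \<rho>) \<le> 1"

definition povm_effect :: "(nat \<Rightarrow> nat) \<Rightarrow> nat set \<Rightarrow> op \<Rightarrow> bool" where
  "povm_effect d I Q \<longleftrightarrow> psd d I Q \<and> psd d I (\<lambda>x y. ident d I x y - Q x y)"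

definition restr :: "cfgs \<Rightarrow> nat set \<Rightarrow> cfgs" where
  "restr x I = (\<lambda>i. if i \<in> I then x i else 0)"

definition tensor :: "(nat \<Rightarrow> nat) \<Rightarrow> nat set \<Rightarrow> nat set \<Rightarrow> op \<Rightarrow> op \<Rightarrow> op" where
  "tensor d I J X Y = (\<lambda>x y. if x \<in> cfg d (I \<union> J) \<and> y \<in> cfg d (I \<union> J)
      then X (restr x I) (restr y I) * Y (restr x J) (restr y J) else 0)"

text \<open>Reduced operator on S_K of an operator on S_L (K \<subseteq> L): partial trace over S_(L-K).\<close>
definition reduce :: "(nat \<Rightarrow> nat) \<Rightarrow> nat set \<Rightarrow> nat set \<Rightarrow> op \<Rightarrow> op" where
  "reduce d L K \<rho> = (\<lambda>x y. if x \<in> cfg d K \<and> y \<in> cfg d K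
      then (\<Sum>z\<in>cfg d (L - K). \<rho> (\<lambda>i. x i + z i) (\<lambda>i. y i + z i)) else 0)"

definition complexity_family ::
  "(nat \<Rightarrow> nat) \<Rightarrow> nat \<Rightarrow> (real \<Rightarrow> nat set \<Rightarrow> op set) \<Rightarrow> bool" where
  "complexity_family d N M \<longleftrightarrow>
     (\<forall>I r. I \<subseteq> {..<N} \<and> 0 \<le> r \<longrightarrow> (\<forall>Q\<in>M r I. povm_effect d I Q)) \<and>
     (\<forall>I. I \<subseteq> {..<N} \<longrightarrow> ident d I \<in> M 0 I) \<and>
     (\<forall>I r r'. I \<subseteq> {..<N} \<and> 0 \<le> r \<and> r \<le> r' \<longrightarrow> M r I \<subseteq> M r' I) \<and>
     (\<forall>I J r r' Q1 Q2. I \<subseteq> {..<N} \<and> J \<subseteq> {..<N} \<and> I \<inter> J = {} \<and> 0 \<le> r \<and> 0 \<le> r' \<and>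
        Q1 \<in> M r I \<and> Q2 \<in> M r' J \<longrightarrow> tensor d I J Q1 Q2 \<in> M (r + r') (I \<union> J))"

definition elog :: "ereal \<Rightarrow> ereal" where
  "elog t = (if t = \<infinity> then \<infinity> else if t \<le> 0 then -\<infinity> else ereal (ln (real_of_ereal t)))"

text \<open>Complexity relative entropy on subsystem S_X (inf over the empty set is +\<infinity>).\<close>
definition cre :: "(nat \<Rightarrow> nat) \<Rightarrow> (real \<Rightarrow> nat set \<Rightarrow> op set) \<Rightarrow> real \<Rightarrow> real \<Rightarrow>
    nat set \<Rightarrow> op \<Rightarrow> op \<Rightarrow> ereal" where
  "cre d M r \<eta> X \<rho> \<Gamma> = - elog (Inf {ereal (Re (op_trace d X (op_mult d X Q \<Gamma>)) /
                                          Re (op_trace d X (op_mult d X Q \<rho>))) |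
        Q. Q \<in> M r X \<and> Re (op_trace d X (op_mult d X Q \<rho>)) \<ge> \<eta>})"

definition cce :: "(nat \<Rightarrow> nat) \<Rightarrow> (real \<Rightarrow> nat set \<Rightarrow> op set) \<Rightarrow> real \<Rightarrow> real \<Rightarrow>
    nat set \<Rightarrow> nat set \<Rightarrow> nat set \<Rightarrow> op \<Rightarrow> ereal" where
  "cce d M r \<eta> L X Y \<rho> = - cre d M r \<eta> (X \<union> Y) (reduce d L (X \<union> Y) \<rho>)
        (tensor d X Y (ident d X) (reduce d L Y \<rho>))"

end

theory Submission
  imports Defs
begin

text \<open>Tensoring an admissible effect Q on AB with the identity on C gives an admissible effect
  Q \<otimes> 1 on ABC of the same complexity, and tr((Q \<otimes> 1) X) = tr(Q tr_C X). Since
  tr_C \<rho>_ABC = \<rho>_AB and tr_C (1_A \<otimes> \<rho>_BC) = 1_A \<otimes> \<rho>_B, every ratio competing in the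
  infimum defining the relative entropy on AB also competes on ABC. Hence the infimum on ABC is
  smaller, its relative entropy larger, and the conditional entropy smaller.\<close>

lemma finite_cfg: "finite I \<Longrightarrow> finite (cfg d I)"
proof -
  assume "finite I"
  have "inj_on (\<lambda>x. restrict x I) (cfg d I)"
    unfolding inj_on_def cfg_def restrict_def by (auto simp: fun_eq_iff) (metis)
  moreover have "(\<lambda>x. restrict x I) ` cfg d I \<subseteq> PiE I (\<lambda>i. {..<d i})"
    unfolding cfg_def by auto
  moreover have "finite (PiE I (\<lambda>i. {..<d i}))"
    using \<open>finite I\<close> by (simp add: finite_PiE)
  ultimately show ?thesis using finite_imageD finite_subset by blast
qed

lemma cfg_plus:
  assumes "a \<in> cfg d I" "c \<in> cfg d J" "I \<inter> J = {}"
  shows "(\<lambda>i. a i + c i) \<in> cfg d (I \<union> J)"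
  using assms unfolding cfg_def by auto

lemma restr_plus_cfg:
  assumes "a \<in> cfg d I" "c \<in> cfg d J" "I \<inter> J = {}"
  shows "restr (\<lambda>i. a i + c i) I = a" "restr (\<lambda>i. a i + c i) J = c"
  using assms unfolding restr_def cfg_def by (auto simp: fun_eq_iff)

lemma bij_betw_cfg_plus:
  assumes "I \<inter> J = {}"
  shows "bij_betw (\<lambda>(x, y). (\<lambda>i. x i + y i)) (cfg d I \<times> cfg d J) (cfg d (I \<union> J))"
proof (rule bij_betw_byWitness[where f' = "\<lambda>z. (restr z I, restr z J)"])
  show "\<forall>p\<in>cfg d I \<times> cfg d J. (restr (case p of (x, y) \<Rightarrow> \<lambda>i. x i + y i) I,
          restr (case p of (x, y) \<Rightarrow> \<lambda>i. x i + y i) J) = p"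
    using restr_plus_cfg[OF _ _ assms] by auto
  show "\<forall>z\<in>cfg d (I \<union> J). (case (restr z I, restr z J) of (x, y) \<Rightarrow> \<lambda>i. x i + y i) = z"
    using assms unfolding cfg_def restr_def by (auto simp: fun_eq_iff)
  show "(\<lambda>(x, y) i. x i + y i) ` (cfg d I \<times> cfg d J) \<subseteq> cfg d (I \<union> J)"
    using cfg_plus[OF _ _ assms] by auto
  show "(\<lambda>z. (restr z I, restr z J)) ` cfg d (I \<union> J) \<subseteq> cfg d I \<times> cfg d J"
    unfolding cfg_def restr_def by auto
qed

lemma sum_cfg_Un:
  assumes "I \<inter> J = {}"
  shows "(\<Sum>z\<in>cfg d (I \<union> J). f z) = (\<Sum>x\<in>cfg d I. \<Sum>y\<in>cfg d J. f (\<lambda>i. x i + y i))"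
proof -
  have "(\<Sum>z\<in>cfg d (I \<union> J). f z)
      = (\<Sum>p\<in>cfg d I \<times> cfg d J. f ((\<lambda>(x, y). (\<lambda>i. x i + y i)) p))"
    using sum.reindex_bij_betw[OF bij_betw_cfg_plus[OF assms], of f] by simp
  also have "\<dots> = (\<Sum>x\<in>cfg d I. \<Sum>y\<in>cfg d J. f (\<lambda>i. x i + y i))"
    by (simp add: sum.cartesian_product case_prod_beta')
  finally show ?thesis .
qed

lemma reduce_reduce:
  assumes "K \<subseteq> K'" "K' \<subseteq> L"
  shows "reduce d K' K (reduce d L K' \<rho>) = reduce d L K \<rho>"
proof (intro ext)
  fix x y
  show "reduce d K' K (reduce d L K' \<rho>) x y = reduce d L K \<rho> x y"
  proof (cases "x \<in> cfg d K \<and> y \<in> cfg d K")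
    case True
    have KK': "K \<inter> (K' - K) = {}" "K \<union> (K' - K) = K'" using assms by auto
    have split: "L - K = (K' - K) \<union> (L - K')" "(K' - K) \<inter> (L - K') = {}" using assms by auto
    have "reduce d K' K (reduce d L K' \<rho>) x y
        = (\<Sum>z\<in>cfg d (K' - K). \<Sum>w\<in>cfg d (L - K').
             \<rho> (\<lambda>i. x i + (z i + w i)) (\<lambda>i. y i + (z i + w i)))"
      using True cfg_plus[of x d K _ "K' - K"] cfg_plus[of y d K _ "K' - K"] KK'
      unfolding reduce_def by (simp add: add.assoc)
    also have "\<dots> = reduce d L K \<rho> x y"
      using True unfolding reduce_def split(1) sum_cfg_Un[OF split(2)] by simp
    finally show ?thesis .
  qed (auto simp: reduce_def)
qed

lemma reduce_tensor_right:
  assumes IJ: "I \<inter> J = {}" and KJ: "K \<subseteq> J"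
  shows "reduce d (I \<union> J) (I \<union> K) (tensor d I J X Y) = tensor d I K X (reduce d J K Y)"
proof (intro ext)
  fix x y
  show "reduce d (I \<union> J) (I \<union> K) (tensor d I J X Y) x y = tensor d I K X (reduce d J K Y) x y"
  proof (cases "x \<in> cfg d (I \<union> K) \<and> y \<in> cfg d (I \<union> K)")
    case True
    have diff: "I \<union> J - (I \<union> K) = J - K" and disj: "(I \<union> K) \<inter> (J - K) = {}"
      and union: "I \<union> K \<union> (J - K) = I \<union> J" using assms by auto
    have restr: "restr (\<lambda>i. u i + z i) I = restr u I"
        "restr (\<lambda>i. u i + z i) J = (\<lambda>i. restr u K i + z i)"
      if "u \<in> cfg d (I \<union> K)" "z \<in> cfg d (J - K)" for u z
      using that assms unfolding cfg_def restr_def by (auto simp: fun_eq_iff)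
    have restrK: "restr x K \<in> cfg d K" "restr y K \<in> cfg d K"
      using True unfolding cfg_def restr_def by auto
    have "reduce d (I \<union> J) (I \<union> K) (tensor d I J X Y) x y
        = (\<Sum>z\<in>cfg d (J - K). X (restr x I) (restr y I) *
             Y (\<lambda>i. restr x K i + z i) (\<lambda>i. restr y K i + z i))"
      using True cfg_plus[OF _ _ disj, of x d] cfg_plus[OF _ _ disj, of y d]
      unfolding reduce_def diff tensor_def union by (simp add: restr)
    also have "\<dots> = tensor d I K X (reduce d J K Y) x y"
      using True restrK unfolding tensor_def reduce_def by (simp add: sum_distrib_left)
    finally show ?thesis .
  qed (auto simp: reduce_def tensor_def)
qed

lemma op_trace_op_mult:
  "op_trace d I (op_mult d I Q X) = (\<Sum>x\<in>cfg d I. \<Sum>z\<in>cfg d I. Q x z * X z x)"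
  unfolding op_trace_def op_mult_def by simp

lemma op_trace_tensor_ident:
  assumes IJ: "I \<inter> J = {}" and "finite J"
  shows "op_trace d (I \<union> J) (op_mult d (I \<union> J) (tensor d I J Q (ident d J)) X)
       = op_trace d I (op_mult d I Q (reduce d (I \<union> J) I X))"
proof -
  have "op_trace d (I \<union> J) (op_mult d (I \<union> J) (tensor d I J Q (ident d J)) X)
      = (\<Sum>a\<in>cfg d I. \<Sum>c\<in>cfg d J. \<Sum>b\<in>cfg d I. \<Sum>c'\<in>cfg d J.
           tensor d I J Q (ident d J) (\<lambda>i. a i + c i) (\<lambda>i. b i + c' i) *
           X (\<lambda>i. b i + c' i) (\<lambda>i. a i + c i))"
    by (simp add: op_trace_op_mult sum_cfg_Un[OF IJ])
  also have "\<dots> = (\<Sum>a\<in>cfg d I. \<Sum>c\<in>cfg d J. \<Sum>b\<in>cfg d I. \<Sum>c'\<in>cfg d J.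
           (if c' = c then Q a b * X (\<lambda>i. b i + c' i) (\<lambda>i. a i + c i) else 0))"
  proof (intro sum.cong refl)
    fix a c b c' assume "a \<in> cfg d I" "c \<in> cfg d J" "b \<in> cfg d I" "c' \<in> cfg d J"
    then show "tensor d I J Q (ident d J) (\<lambda>i. a i + c i) (\<lambda>i. b i + c' i) *
          X (\<lambda>i. b i + c' i) (\<lambda>i. a i + c i)
        = (if c' = c then Q a b * X (\<lambda>i. b i + c' i) (\<lambda>i. a i + c i) else 0)"
      using cfg_plus[OF _ _ IJ] restr_plus_cfg[OF _ _ IJ] unfolding tensor_def ident_def by auto
  qed
  also have "\<dots> = (\<Sum>a\<in>cfg d I. \<Sum>b\<in>cfg d I. Q a b *
           (\<Sum>c\<in>cfg d J. X (\<lambda>i. b i + c i) (\<lambda>i. a i + c i)))"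
    using finite_cfg[OF \<open>finite J\<close>]
    by (simp add: sum_distrib_left sum.swap[of _ "cfg d J"] cong: sum.cong)
  also have "\<dots> = op_trace d I (op_mult d I Q (reduce d (I \<union> J) I X))"
  proof -
    have "I \<union> J - I = J" using IJ by auto
    then show ?thesis by (simp add: op_trace_op_mult reduce_def)
  qed
  finally show ?thesis .
qed

lemma tensor_ident_in_complexity_set:
  assumes "complexity_family d N M" "I \<subseteq> {..<N}" "J \<subseteq> {..<N}" "I \<inter> J = {}" "0 \<le> r"
    and "Q \<in> M r I"
  shows "tensor d I J Q (ident d J) \<in> M r (I \<union> J)"
  using assms unfolding complexity_family_def by (metis add.right_neutral order_refl)

lemma mono_elog: "mono elog"
proof
  fix t s :: ereal assume "t \<le> s"
  then show "elog t \<le> elog s"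
    unfolding elog_def by (cases t; cases s) auto
qed

lemma cre_reduce_le:
  assumes fam: "complexity_family d N M" and I: "I \<subseteq> {..<N}" and J: "J \<subseteq> {..<N}"
    and IJ: "I \<inter> J = {}" and r: "0 \<le> r"
  shows "cre d M r \<eta> I (reduce d (I \<union> J) I \<rho>) (reduce d (I \<union> J) I \<Gamma>) \<le> cre d M r \<eta> (I \<union> J) \<rho> \<Gamma>"
proof -
  define tr where "tr K Q X = Re (op_trace d K (op_mult d K Q X))" for K Q X
  let ?values = "\<lambda>K X G. {ereal (tr K Q G / tr K Q X) | Q. Q \<in> M r K \<and> \<eta> \<le> tr K Q X}"
  have "?values I (reduce d (I \<union> J) I \<rho>) (reduce d (I \<union> J) I \<Gamma>) \<subseteq> ?values (I \<union> J) \<rho> \<Gamma>"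
  proof clarify
    fix Q assume Q: "Q \<in> M r I" "\<eta> \<le> tr I Q (reduce d (I \<union> J) I \<rho>)"
    have "finite J" using J finite_subset by blast
    then have "tr (I \<union> J) (tensor d I J Q (ident d J)) X = tr I Q (reduce d (I \<union> J) I X)" for X
      unfolding tr_def using op_trace_tensor_ident[OF IJ] by simp
    moreover have "tensor d I J Q (ident d J) \<in> M r (I \<union> J)"
      using tensor_ident_in_complexity_set[OF fam I J IJ r Q(1)] .
    ultimately show "\<exists>Q'. ereal (tr I Q (reduce d (I \<union> J) I \<Gamma>) / tr I Q (reduce d (I \<union> J) I \<rho>))
        = ereal (tr (I \<union> J) Q' \<Gamma> / tr (I \<union> J) Q' \<rho>) \<and> Q' \<in> M r (I \<union> J) \<and> \<eta> \<le> tr (I \<union> J) Q' \<rho>"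
      using Q(2) by metis
  qed
  then have "elog (Inf (?values (I \<union> J) \<rho> \<Gamma>))
      \<le> elog (Inf (?values I (reduce d (I \<union> J) I \<rho>) (reduce d (I \<union> J) I \<Gamma>)))"
    by (intro monoD[OF mono_elog] Inf_superset_mono)
  then show ?thesis unfolding cre_def tr_def by simp
qed

theorem propositionD23:
  fixes d :: "nat \<Rightarrow> nat" and N :: nat and M :: "real \<Rightarrow> nat set \<Rightarrow> op set"
    and A B C :: "nat set" and \<rho> :: op and r \<eta> :: real
  assumes dims: "\<forall>i<N. 0 < d i"
    and fam: "complexity_family d N M"
    and subA: "A \<subseteq> {..<N}" and subB: "B \<subseteq> {..<N}" and subC: "C \<subseteq> {..<N}"
    and disj: "A \<inter> B = {}" "A \<inter> C = {}" "B \<inter> C = {}"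
    and state: "subnormalized_state d (A \<union> B \<union> C) \<rho>"
    and r: "0 \<le> r"
    and eta: "0 < \<eta>" "\<eta> \<le> Re (op_trace d (A \<union> B \<union> C) \<rho>)"
  shows "cce d M r \<eta> (A \<union> B \<union> C) A (B \<union> C) \<rho> \<le> cce d M r \<eta> (A \<union> B \<union> C) A B \<rho>"
proof -
  let ?L = "A \<union> B \<union> C"
  let ?\<Gamma> = "tensor d A (B \<union> C) (ident d A) (reduce d ?L (B \<union> C) \<rho>)"
  have reduce_state: "reduce d ?L (A \<union> B) (reduce d ?L ?L \<rho>) = reduce d ?L (A \<union> B) \<rho>"
    by (simp add: reduce_reduce)
  have "reduce d ?L (A \<union> B) ?\<Gamma>
      = tensor d A B (ident d A) (reduce d (B \<union> C) B (reduce d ?L (B \<union> C) \<rho>))"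
  proof -
    have "A \<inter> (B \<union> C) = {}" using disj by auto
    from reduce_tensor_right[OF this, of B d] show ?thesis by (simp add: Un_assoc)
  qed
  also have "\<dots> = tensor d A B (ident d A) (reduce d ?L B \<rho>)"
    by (subst reduce_reduce) auto
  finally have reduce_ref: "reduce d ?L (A \<union> B) ?\<Gamma> = tensor d A B (ident d A) (reduce d ?L B \<rho>)" .
  have "cre d M r \<eta> (A \<union> B) (reduce d ?L (A \<union> B) \<rho>) (tensor d A B (ident d A) (reduce d ?L B \<rho>))
      \<le> cre d M r \<eta> ?L (reduce d ?L ?L \<rho>) ?\<Gamma>"
  proof -
    have "A \<union> B \<subseteq> {..<N}" "(A \<union> B) \<inter> C = {}" using subA subB disj by auto
    from cre_reduce_le[OF fam this(1) subC this(2) r, of \<eta> "reduce d ?L ?L \<rho>" ?\<Gamma>]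
    show ?thesis unfolding reduce_state reduce_ref .
  qed
  then show ?thesis unfolding cce_def by (simp add: Un_assoc)
qed

end
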